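(* Let $R$ be a Bézout domain of finite Krull dimension. Then $R$ is radically finite if and only if $R$ is a principal ideal domain.
   Context: All rings are commutative with identity. An ideal $I$ of $R$ is called radically perfect if $\mathrm{ht}(I)=\inf\{n \mid \sqrt{I}=\sqrt{(\theta_1,\dots,\theta_n)} \text{ for some } \theta_1,\dots,\theta_n\in R\}$, and moreover, if $\mathrm{ht}(I)=0$, then $\sqrt{I}=\sqrt{(\theta)}$ for some zero divisor $\theta$ of $R$. A ring $R$ is called radically finite if every prime ideal $P$ of $R$ is radically perfect and, in addition, the set of ideals of $R$ that are generated by $\mathrm{ht}(P)$ elements and have radical $P$ has a maximal member $A$ such that there are only finitely many ideals in any chain of ideals between $A$ and $P$. *)

theory Defs
  imports Main "HOL-Library.Extended_Nat"
begin

definition is_ideal :: "'a::comm_ring_1 set \<Rightarrow> bool" where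
  "is_ideal I \<longleftrightarrow> 0 \<in> I \<and> (\<forall>x\<in>I. \<forall>y\<in>I. x + y \<in> I) \<and> (\<forall>r. \<forall>x\<in>I. r * x \<in> I)"

definition is_prime_ideal :: "'a::comm_ring_1 set \<Rightarrow> bool" where
  "is_prime_ideal P \<longleftrightarrow> is_ideal P \<and> P \<noteq> UNIV \<and> (\<forall>a b. a * b \<in> P \<longrightarrow> a \<in> P \<or> b \<in> P)"

definition gen_ideal :: "'a::comm_ring_1 set \<Rightarrow> 'a set" where
  "gen_ideal S = \<Inter>{I. is_ideal I \<and> S \<subseteq> I}"

definition radical :: "'a::comm_ring_1 set \<Rightarrow> 'a set" where
  "radical I = {x. \<exists>n. x ^ n \<in> I}"

definition zero_divisor :: "'a::comm_ring_1 \<Rightarrow> bool" where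
  "zero_divisor a \<longleftrightarrow> (\<exists>b. b \<noteq> 0 \<and> a * b = 0)"

definition prime_height :: "'a::comm_ring_1 set \<Rightarrow> enat" where
  "prime_height P = (SUP n \<in> {n. \<exists>f :: nat \<Rightarrow> 'a set.
       (\<forall>i\<le>n. is_prime_ideal (f i)) \<and> (\<forall>i<n. f i \<subset> f (Suc i)) \<and> f n = P}. enat n)"

definition ht :: "'a::comm_ring_1 set \<Rightarrow> enat" where
  "ht I = (INF P \<in> {P. is_prime_ideal P \<and> I \<subseteq> P}. prime_height P)"

definition krull_dim :: "'a::comm_ring_1 itself \<Rightarrow> enat" where
  "krull_dim _ = (SUP P \<in> {P :: 'a set. is_prime_ideal P}. prime_height P)"

definition radically_perfect :: "'a::comm_ring_1 set \<Rightarrow> bool" where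
  "radically_perfect I \<longleftrightarrow>
     ht I = (INF n \<in> {n. \<exists>\<theta>s :: 'a list. length \<theta>s = n \<and>
                 radical I = radical (gen_ideal (set \<theta>s))}. enat n) \<and>
     (ht I = 0 \<longrightarrow> (\<exists>\<theta>. zero_divisor \<theta> \<and> radical I = radical (gen_ideal {\<theta>})))"

definition radically_finite :: "'a::comm_ring_1 itself \<Rightarrow> bool" where
  "radically_finite _ \<longleftrightarrow>
     (\<forall>P :: 'a set. is_prime_ideal P \<longrightarrow>
        radically_perfect P \<and>
        (let S = {A. (\<exists>\<theta>s :: 'a list. enat (length \<theta>s) = ht P \<and> A = gen_ideal (set \<theta>s))
                     \<and> radical A = P}
         in \<exists>A\<in>S. \<not> (\<exists>B\<in>S. A \<subset> B) \<and>
              (\<forall>C. C \<subseteq> {J. is_ideal J \<and> A \<subseteq> J \<and> J \<subseteq> P} \<and>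
                   (\<forall>J\<in>C. \<forall>K\<in>C. J \<subseteq> K \<or> K \<subseteq> J) \<longrightarrow> finite C)))"

definition bezout_domain :: "'a::idom itself \<Rightarrow> bool" where
  "bezout_domain _ \<longleftrightarrow> (\<forall>S :: 'a set. finite S \<longrightarrow> (\<exists>d. gen_ideal S = gen_ideal {d}))"

definition principal_ideal_domain :: "'a::idom itself \<Rightarrow> bool" where
  "principal_ideal_domain _ \<longleftrightarrow> (\<forall>I :: 'a set. is_ideal I \<longrightarrow> (\<exists>d. I = gen_ideal {d}))"

end

theory Submission
  imports Defs
begin

text \<open>If R is radically finite and P is prime, let A be maximal among the ideals generated by
  ht P elements with radical P. If ht P = 0 then A = 0, so P = 0. Otherwise, for x \<in> P the
  ideal A + (x) is principal by the Bezout property, hence (padding with zeros) again generated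
  by ht P elements, and its radical is still P; maximality gives x \<in> A. So P = A is principal,
  and by Kaplansky's theorem (an ideal maximal among non-principal ideals is prime) R is a PID.
  Conversely, in a PID the zero ideal has height 0 and every nonzero prime is maximal among
  primes, so has height 1; being principal, every prime P is generated by ht P elements and is
  radically perfect, and P itself is the ideal A required by radical finiteness.
  Finite Krull dimension is needed in neither direction.\<close>

definition is_principal_ideal :: "'a::comm_ring_1 set \<Rightarrow> bool" where
  "is_principal_ideal I \<longleftrightarrow> (\<exists>d. I = gen_ideal {d})"

lemma zero_in_ideal: "is_ideal I \<Longrightarrow> 0 \<in> I"
  and is_ideal_add: "is_ideal I \<Longrightarrow> x \<in> I \<Longrightarrow> y \<in> I \<Longrightarrow> x + y \<in> I"
  and is_ideal_mult_left: "is_ideal I \<Longrightarrow> x \<in> I \<Longrightarrow> r * x \<in> I"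
  and is_ideal_mult_right: "is_ideal I \<Longrightarrow> x \<in> I \<Longrightarrow> x * r \<in> I"
  by (simp_all add: is_ideal_def mult.commute[of x])

lemma is_ideal_gen_ideal: "is_ideal (gen_ideal S)"
  unfolding gen_ideal_def is_ideal_def by auto

lemma gen_ideal_superset: "S \<subseteq> gen_ideal S"
  unfolding gen_ideal_def by auto

lemma gen_ideal_least: "is_ideal I \<Longrightarrow> S \<subseteq> I \<Longrightarrow> gen_ideal S \<subseteq> I"
  unfolding gen_ideal_def by auto

lemma gen_ideal_singleton: "gen_ideal {d} = range (\<lambda>r. r * d)"
proof
  have "is_ideal (range (\<lambda>r. r * d))"
    unfolding is_ideal_def
    by (auto simp: distrib_right[symmetric] mult.assoc[symmetric]) (metis mult_zero_left rangeI)
  moreover have "d \<in> range (\<lambda>r. r * d)"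
    by (metis mult_1 rangeI)
  ultimately show "gen_ideal {d} \<subseteq> range (\<lambda>r. r * d)"
    by (simp add: gen_ideal_least)
  show "range (\<lambda>r. r * d) \<subseteq> gen_ideal {d}"
    using gen_ideal_superset[of "{d}"] is_ideal_gen_ideal is_ideal_mult_left by blast
qed

lemma gen_ideal_empty: "gen_ideal {} = {0}"
  using gen_ideal_least[of "{0}" "{}"] zero_in_ideal[OF is_ideal_gen_ideal]
  by (auto simp: is_ideal_def)

lemma gen_ideal_mono: "S \<subseteq> T \<Longrightarrow> gen_ideal S \<subseteq> gen_ideal T"
  unfolding gen_ideal_def by auto

lemma gen_ideal_insert_zero: "gen_ideal (insert 0 S) = gen_ideal S"
proof (rule antisym)
  have "insert 0 S \<subseteq> gen_ideal S"
    using gen_ideal_superset[of S] zero_in_ideal[OF is_ideal_gen_ideal] by blast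
  then show "gen_ideal (insert 0 S) \<subseteq> gen_ideal S"
    by (rule gen_ideal_least[OF is_ideal_gen_ideal])
  show "gen_ideal S \<subseteq> gen_ideal (insert 0 S)"
    by (rule gen_ideal_mono) blast
qed

lemma gen_ideal_zero: "gen_ideal {0} = {0}"
  by (metis gen_ideal_empty gen_ideal_insert_zero)

lemma gen_ideal_one: "gen_ideal {1} = UNIV"
  by (auto simp: gen_ideal_singleton)

lemma is_ideal_colon: "is_ideal I \<Longrightarrow> is_ideal {x. b * x \<in> I}"
  unfolding is_ideal_def by (auto simp: distrib_left mult.left_commute[of b])

section \<open>Kaplansky's theorem\<close>

lemma is_ideal_Union_chain:
  assumes "C \<noteq> {}" "\<And>I. I \<in> C \<Longrightarrow> is_ideal I" "chain\<^sub>\<subseteq> C"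
  shows "is_ideal (\<Union>C)"
  unfolding is_ideal_def
proof (intro conjI ballI allI)
  show "0 \<in> \<Union>C"
    using assms(1,2) zero_in_ideal by blast
  show "x + y \<in> \<Union>C" if xy: "x \<in> \<Union>C" "y \<in> \<Union>C" for x y
  proof -
    obtain X Y where "X \<in> C" "Y \<in> C" "x \<in> X" "y \<in> Y"
      using xy by blast
    moreover have "X \<subseteq> Y \<or> Y \<subseteq> X"
      using assms(3) \<open>X \<in> C\<close> \<open>Y \<in> C\<close> by (auto simp: chain_subset_def)
    ultimately show ?thesis
      using assms(2) is_ideal_add by blast
  qed
  show "r * x \<in> \<Union>C" if "x \<in> \<Union>C" for r x
    using that assms(2) is_ideal_mult_left by blast
qed

lemma Union_chain_not_principal:
  assumes "C \<noteq> {}" "chain\<^sub>\<subseteq> C"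
    and C: "\<And>I. I \<in> C \<Longrightarrow> is_ideal I \<and> \<not> is_principal_ideal I"
  shows "\<not> is_principal_ideal (\<Union>C)"
proof
  assume "is_principal_ideal (\<Union>C)"
  then obtain d where d: "\<Union>C = gen_ideal {d}"
    by (auto simp: is_principal_ideal_def)
  then obtain X where X: "X \<in> C" "d \<in> X"
    using gen_ideal_superset[of "{d}"] by auto
  then have "gen_ideal {d} \<subseteq> X"
    using C gen_ideal_least[of X "{d}"] by blast
  then have "X = gen_ideal {d}"
    using X(1) d by blast
  then show False
    using X(1) C by (auto simp: is_principal_ideal_def)
qed

lemma exists_maximal_non_principal_ideal:
  fixes I :: "'a::comm_ring_1 set"
  assumes "is_ideal I" "\<not> is_principal_ideal I"
  obtains M :: "'a set" where "is_ideal M" "\<not> is_principal_ideal M"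
    "\<And>J. is_ideal J \<Longrightarrow> M \<subset> J \<Longrightarrow> is_principal_ideal J"
proof -
  define N where "N = {J :: 'a set. is_ideal J \<and> \<not> is_principal_ideal J}"
  have "\<forall>C\<in>chains N. \<exists>U\<in>N. \<forall>X\<in>C. X \<subseteq> U"
  proof
    fix C
    assume "C \<in> chains N"
    then have CN: "\<And>X. X \<in> C \<Longrightarrow> is_ideal X \<and> \<not> is_principal_ideal X"
      and ch: "chain\<^sub>\<subseteq> C"
      by (auto simp: chains_def N_def)
    show "\<exists>U\<in>N. \<forall>X\<in>C. X \<subseteq> U"
    proof (cases "C = {}")
      case True
      have "I \<in> N"
        using assms by (simp add: N_def)
      then show ?thesis
        using True by blast
    next
      case False
      have "\<Union>C \<in> N"
        using is_ideal_Union_chain[OF False _ ch] Union_chain_not_principal[OF False ch] CN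
        by (simp add: N_def)
      then show ?thesis
        by blast
    qed
  qed
  from Zorn_Lemma2[OF this] obtain M
    where M: "M \<in> N" and max: "\<And>X. X \<in> N \<Longrightarrow> M \<subseteq> X \<Longrightarrow> X = M"
    by blast
  show thesis
  proof (rule that)
    show "is_ideal M" "\<not> is_principal_ideal M"
      using M by (simp_all add: N_def)
    show "is_principal_ideal J" if "is_ideal J" "M \<subset> J" for J
      using that max[of J] by (auto simp: N_def)
  qed
qed

text \<open>Kaplansky: if a b \<in> M with a, b \<notin> M, then M + (a) = (c) and the colon ideal
  (M : c) \<supseteq> M + (b) are principal, say (M : c) = (d), and then M = (d c).\<close>
lemma maximal_non_principal_ideal_is_prime:
  assumes M: "is_ideal M" "\<not> is_principal_ideal M"
    and max: "\<And>J. is_ideal J \<Longrightarrow> M \<subset> J \<Longrightarrow> is_principal_ideal J"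
  shows "is_prime_ideal M"
  unfolding is_prime_ideal_def
proof (intro conjI allI impI)
  show "is_ideal M"
    by (rule M(1))
  show "M \<noteq> UNIV"
    using M(2) gen_ideal_one by (auto simp: is_principal_ideal_def)
  fix a b
  assume ab: "a * b \<in> M"
  show "a \<in> M \<or> b \<in> M"
  proof (rule ccontr)
    assume "\<not> (a \<in> M \<or> b \<in> M)"
    then have a: "a \<notin> M" and b: "b \<notin> M" by auto
    have "M \<subset> gen_ideal (insert a M)"
      using gen_ideal_superset[of "insert a M"] a by auto
    then have "is_principal_ideal (gen_ideal (insert a M))"
      by (rule max[OF is_ideal_gen_ideal])
    then obtain c where c: "gen_ideal (insert a M) = gen_ideal {c}"
      by (auto simp: is_principal_ideal_def)
    define J where "J = {x. c * x \<in> M}"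
    have J: "is_ideal J"
      unfolding J_def using M(1) by (rule is_ideal_colon)
    have "insert a M \<subseteq> {x. b * x \<in> M}"
      using ab is_ideal_mult_left[OF M(1)] by (auto simp: mult.commute)
    then have "gen_ideal {c} \<subseteq> {x. b * x \<in> M}"
      unfolding c[symmetric] by (rule gen_ideal_least[OF is_ideal_colon[OF M(1)]])
    then have "b \<in> J"
      using gen_ideal_superset[of "{c}"] by (auto simp: J_def mult.commute)
    moreover have "M \<subseteq> J"
      using is_ideal_mult_left[OF M(1)] by (auto simp: J_def)
    ultimately obtain d where d: "J = gen_ideal {d}"
      using max[OF J] b by (auto simp: is_principal_ideal_def)
    have "M = gen_ideal {d * c}"
    proof
      have "c * d \<in> M"
        using d gen_ideal_superset[of "{d}"] by (auto simp: J_def)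
      then show "gen_ideal {d * c} \<subseteq> M"
        using gen_ideal_least[OF M(1)] by (simp add: mult.commute)
      show "M \<subseteq> gen_ideal {d * c}"
      proof
        fix m
        assume m: "m \<in> M"
        then have "m \<in> gen_ideal {c}"
          using c gen_ideal_superset[of "insert a M"] by auto
        then obtain s where s: "m = s * c"
          by (auto simp: gen_ideal_singleton)
        then have "s \<in> J"
          using m by (simp add: J_def mult.commute)
        then obtain t where "s = t * d"
          using d by (auto simp: gen_ideal_singleton)
        then show "m \<in> gen_ideal {d * c}"
          using s by (auto simp: gen_ideal_singleton mult.assoc)
      qed
    qed
    then show False
      using M(2) by (auto simp: is_principal_ideal_def)
  qed
qed

lemma principal_ideal_domain_if_primes_principal:
  assumes "\<And>P :: 'a::idom set. is_prime_ideal P \<Longrightarrow> is_principal_ideal P"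
  shows "principal_ideal_domain TYPE('a)"
  unfolding principal_ideal_domain_def
proof (intro allI impI)
  fix I :: "'a set"
  assume "is_ideal I"
  show "\<exists>d. I = gen_ideal {d}"
  proof (rule ccontr)
    assume "\<nexists>d. I = gen_ideal {d}"
    then have "\<not> is_principal_ideal I"
      by (simp add: is_principal_ideal_def)
    then obtain M :: "'a set" where "is_ideal M" "\<not> is_principal_ideal M"
      "\<And>J. is_ideal J \<Longrightarrow> M \<subset> J \<Longrightarrow> is_principal_ideal J"
      using exists_maximal_non_principal_ideal \<open>is_ideal I\<close> by blast
    then have "is_prime_ideal M"
      by (rule maximal_non_principal_ideal_is_prime)
    then show False
      using assms \<open>\<not> is_principal_ideal M\<close> by blast
  qed
qed

section \<open>Radicals, heights and radical finiteness\<close>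

lemma radical_superset: "I \<subseteq> radical I"
  unfolding radical_def by (auto intro: exI[of _ 1])

lemma radical_mono: "I \<subseteq> J \<Longrightarrow> radical I \<subseteq> radical J"
  unfolding radical_def by auto

lemma radical_zero: "radical {0::'a::idom} = {0}"
  unfolding radical_def by auto

lemma zero_in_prime_ideal: "is_prime_ideal P \<Longrightarrow> 0 \<in> P"
  by (simp add: is_prime_ideal_def zero_in_ideal)

lemma is_prime_ideal_zero_ideal: "is_prime_ideal {0::'a::idom}"
proof -
  have "{0::'a} \<noteq> UNIV"
    by (metis UNIV_I one_neq_zero singletonD)
  then show ?thesis
    unfolding is_prime_ideal_def is_ideal_def by auto
qed

lemma radical_prime_ideal:
  assumes "is_prime_ideal P"
  shows "radical P = P"
proof
  have "x \<in> P" if "x ^ n \<in> P" for x n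
    using that
  proof (induction n)
    case 0
    then have "P = UNIV"
      using assms is_ideal_mult_right[of P 1] by (auto simp: is_prime_ideal_def)
    then show ?case
      using assms by (simp add: is_prime_ideal_def)
  next
    case (Suc n)
    then show ?case
      using assms by (auto simp: is_prime_ideal_def)
  qed
  then show "radical P \<subseteq> P"
    unfolding radical_def by auto
  show "P \<subseteq> radical P"
    by (rule radical_superset)
qed

lemma radical_eq_prime_ideal_if_between:
  assumes "is_prime_ideal P" "A \<subseteq> B" "B \<subseteq> P" "radical A = P"
  shows "radical B = P"
  using radical_mono[OF assms(2)] radical_mono[OF assms(3)] radical_prime_ideal[OF assms(1)] assms(4)
  by blast

definition prime_chain_lengths :: "'a::comm_ring_1 set \<Rightarrow> nat set" where
  "prime_chain_lengths P = {n. \<exists>f :: nat \<Rightarrow> 'a set.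
     (\<forall>i\<le>n. is_prime_ideal (f i)) \<and> (\<forall>i<n. f i \<subset> f (Suc i)) \<and> f n = P}"

lemma prime_height_eq_SUP_prime_chain_lengths:
  "prime_height P = (SUP n \<in> prime_chain_lengths P. enat n)"
  by (simp add: prime_height_def prime_chain_lengths_def)

lemma zero_in_prime_chain_lengths: "is_prime_ideal P \<Longrightarrow> 0 \<in> prime_chain_lengths P"
  by (auto simp: prime_chain_lengths_def intro!: exI[of _ "\<lambda>_. P"])

lemma Suc_in_prime_chain_lengths:
  assumes "is_prime_ideal P" "Q \<subset> P" "m \<in> prime_chain_lengths Q"
  shows "Suc m \<in> prime_chain_lengths P"
proof -
  obtain f where prime: "\<forall>i\<le>m. is_prime_ideal (f i)" and incr: "\<forall>i<m. f i \<subset> f (Suc i)"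
    and top: "f m = Q"
    using assms(3) by (auto simp: prime_chain_lengths_def)
  define g where "g = f(Suc m := P)"
  have "\<forall>i\<le>Suc m. is_prime_ideal (g i)"
    using prime assms(1) by (auto simp: g_def le_Suc_eq)
  moreover have "\<forall>i<Suc m. g i \<subset> g (Suc i)"
    using incr top assms(2) by (auto simp: g_def less_Suc_eq)
  moreover have "g (Suc m) = P"
    by (simp add: g_def)
  ultimately show ?thesis
    unfolding prime_chain_lengths_def by blast
qed

lemma Suc_in_prime_chain_lengthsE:
  assumes "Suc m \<in> prime_chain_lengths P"
  obtains Q where "is_prime_ideal Q" "Q \<subset> P" "m \<in> prime_chain_lengths Q"
proof -
  obtain f where prime: "\<forall>i\<le>Suc m. is_prime_ideal (f i)" and incr: "\<forall>i<Suc m. f i \<subset> f (Suc i)"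
    and top: "f (Suc m) = P"
    using assms by (auto simp: prime_chain_lengths_def)
  show thesis
  proof (rule that)
    show "is_prime_ideal (f m)" "f m \<subset> P"
      using prime incr top by auto
    show "m \<in> prime_chain_lengths (f m)"
      unfolding prime_chain_lengths_def using prime incr by (intro CollectI exI[of _ f]) auto
  qed
qed

lemma prime_chain_lengths_mono:
  assumes "is_prime_ideal Q" "P \<subseteq> Q"
  shows "prime_chain_lengths P \<subseteq> prime_chain_lengths Q"
proof
  fix n
  assume "n \<in> prime_chain_lengths P"
  then show "n \<in> prime_chain_lengths Q"
  proof (cases n)
    case 0
    then show ?thesis
      using assms(1) zero_in_prime_chain_lengths by blast
  next
    case (Suc m)
    then obtain P' where "is_prime_ideal P'" "P' \<subset> P" "m \<in> prime_chain_lengths P'"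
      using Suc_in_prime_chain_lengthsE \<open>n \<in> prime_chain_lengths P\<close> by blast
    then show ?thesis
      using Suc Suc_in_prime_chain_lengths[OF assms(1)] assms(2) by blast
  qed
qed

lemma ht_prime_ideal:
  assumes "is_prime_ideal P"
  shows "ht P = prime_height P"
  unfolding ht_def
proof (rule antisym)
  show "(INF Q \<in> {Q. is_prime_ideal Q \<and> P \<subseteq> Q}. prime_height Q) \<le> prime_height P"
    using assms by (auto intro: INF_lower)
  show "prime_height P \<le> (INF Q \<in> {Q. is_prime_ideal Q \<and> P \<subseteq> Q}. prime_height Q)"
    unfolding prime_height_eq_SUP_prime_chain_lengths
    by (intro INF_greatest SUP_subset_mono prime_chain_lengths_mono order.refl) auto
qed

lemma prime_chain_lengths_zero_ideal: "prime_chain_lengths {0::'a::idom} = {0}"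
proof (intro equalityI subsetI)
  fix n
  assume n: "n \<in> prime_chain_lengths {0::'a}"
  show "n \<in> {0}"
  proof (cases n)
    case (Suc m)
    then obtain Q :: "'a set" where "is_prime_ideal Q" "Q \<subset> {0}"
      using n Suc_in_prime_chain_lengthsE by metis
    then show ?thesis
      using zero_in_prime_ideal by blast
  qed simp
qed (simp add: zero_in_prime_chain_lengths is_prime_ideal_zero_ideal)

lemma prime_height_zero_ideal: "prime_height {0::'a::idom} = 0"
  by (simp add: prime_height_eq_SUP_prime_chain_lengths prime_chain_lengths_zero_ideal zero_enat_def)

lemma prime_height_eq_1:
  fixes Q :: "'a::idom set"
  assumes Q: "is_prime_ideal Q" "Q \<noteq> {0}"
    and minimal: "\<And>P. is_prime_ideal P \<Longrightarrow> P \<noteq> {0} \<Longrightarrow> P \<subseteq> Q \<Longrightarrow> P = Q"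
  shows "prime_height Q = 1"
proof -
  have "{0} \<subset> Q"
    using Q zero_in_prime_ideal by blast
  have "prime_chain_lengths Q = {0, 1}"
  proof (intro equalityI subsetI)
    fix n
    assume n: "n \<in> prime_chain_lengths Q"
    show "n \<in> {0, 1}"
    proof (cases n)
      case (Suc m)
      then obtain P where P: "is_prime_ideal P" "P \<subset> Q" "m \<in> prime_chain_lengths P"
        using n Suc_in_prime_chain_lengthsE by metis
      then have "P = {0}"
        using minimal by blast
      then have "m = 0"
        using P(3) by (simp add: prime_chain_lengths_zero_ideal)
      then show ?thesis
        using Suc by simp
    qed simp
  next
    fix n :: nat
    assume "n \<in> {0, 1}"
    then show "n \<in> prime_chain_lengths Q"
      using zero_in_prime_chain_lengths[OF Q(1)]
        Suc_in_prime_chain_lengths[OF Q(1) \<open>{0} \<subset> Q\<close>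
          zero_in_prime_chain_lengths[OF is_prime_ideal_zero_ideal]]
      by auto
  qed
  then show ?thesis
    by (simp add: prime_height_eq_SUP_prime_chain_lengths one_enat_def sup_enat_def)
qed

definition arithmetical_rank :: "'a::comm_ring_1 set \<Rightarrow> enat" where
  "arithmetical_rank I = (INF n \<in> {n. \<exists>\<theta>s :: 'a list. length \<theta>s = n \<and>
     radical I = radical (gen_ideal (set \<theta>s))}. enat n)"

lemma arithmetical_rank_eq_0:
  assumes "radical I = radical {0}"
  shows "arithmetical_rank I = 0"
proof -
  have "radical I = radical (gen_ideal (set []))"
    using assms by (simp add: gen_ideal_empty)
  then have "arithmetical_rank I \<le> 0"
    unfolding arithmetical_rank_def zero_enat_def by (intro INF_lower) blast
  then show ?thesis
    by simp
qed

lemma arithmetical_rank_eq_1: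
  assumes "radical I = radical (gen_ideal {p})" "radical I \<noteq> radical {0}"
  shows "arithmetical_rank I = 1"
proof (rule antisym)
  have "radical I = radical (gen_ideal (set [p]))"
    using assms(1) by simp
  then show "arithmetical_rank I \<le> 1"
    unfolding arithmetical_rank_def one_enat_def
    by (intro INF_lower CollectI exI[of _ "[p]"] conjI) simp_all
  show "1 \<le> arithmetical_rank I"
    unfolding arithmetical_rank_def
  proof (rule INF_greatest)
    fix n
    assume "n \<in> {n. \<exists>\<theta>s. length \<theta>s = n \<and> radical I = radical (gen_ideal (set \<theta>s))}"
    then obtain \<theta>s :: "'a list" where len: "length \<theta>s = n"
      and rad: "radical I = radical (gen_ideal (set \<theta>s))"
      by blast
    have "\<theta>s \<noteq> []"
    proof
      assume "\<theta>s = []"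
      then have "radical I = radical {0}"
        using rad by (simp add: gen_ideal_empty)
      then show False
        using assms(2) by contradiction
    qed
    then have "1 \<le> n"
      using len by (cases \<theta>s) simp_all
    then show "1 \<le> enat n"
      by (simp add: one_enat_def)
  qed
qed

lemma radically_perfect_iff:
  "radically_perfect I \<longleftrightarrow> ht I = arithmetical_rank I \<and>
    (ht I = 0 \<longrightarrow> (\<exists>\<theta>. zero_divisor \<theta> \<and> radical I = radical (gen_ideal {\<theta>})))"
  unfolding radically_perfect_def arithmetical_rank_def ..

definition ht_generated_radical_ideals :: "'a::comm_ring_1 set \<Rightarrow> 'a set set" where
  "ht_generated_radical_ideals P = {A. (\<exists>\<theta>s :: 'a list. enat (length \<theta>s) = ht P \<and>
     A = gen_ideal (set \<theta>s)) \<and> radical A = P}"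

lemma radically_finite_iff:
  "radically_finite TYPE('a::comm_ring_1) \<longleftrightarrow>
    (\<forall>P :: 'a set. is_prime_ideal P \<longrightarrow> radically_perfect P \<and>
      (\<exists>A\<in>ht_generated_radical_ideals P. \<not> (\<exists>B\<in>ht_generated_radical_ideals P. A \<subset> B) \<and>
        (\<forall>C. C \<subseteq> {J. is_ideal J \<and> A \<subseteq> J \<and> J \<subseteq> P} \<and> (\<forall>J\<in>C. \<forall>K\<in>C. J \<subseteq> K \<or> K \<subseteq> J)
          \<longrightarrow> finite C)))"
  unfolding radically_finite_def ht_generated_radical_ideals_def Let_def ..

section \<open>Radically finite Bezout domains are principal\<close>

lemma bezout_gen_ideal_insert:
  fixes x :: "'a::idom"
  assumes "bezout_domain TYPE('a)" "\<theta>s \<noteq> []"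
  obtains \<theta>s' :: "'a list" where "length \<theta>s' = length \<theta>s"
    "gen_ideal (insert x (set \<theta>s)) = gen_ideal (set \<theta>s')"
proof -
  obtain d where d: "gen_ideal (insert x (set \<theta>s)) = gen_ideal {d}"
    using assms(1) unfolding bezout_domain_def by blast
  define \<theta>s' where "\<theta>s' = d # replicate (length \<theta>s - 1) 0"
  have "set \<theta>s' = {d} \<or> set \<theta>s' = insert 0 {d}"
    by (cases "length \<theta>s - 1") (auto simp: \<theta>s'_def)
  then have "gen_ideal (set \<theta>s') = gen_ideal {d}"
    using gen_ideal_insert_zero by metis
  show thesis
  proof (rule that)
    show "length \<theta>s' = length \<theta>s"
      using assms(2) by (simp add: \<theta>s'_def)
    show "gen_ideal (insert x (set \<theta>s)) = gen_ideal (set \<theta>s')"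
      using \<open>gen_ideal (set \<theta>s') = gen_ideal {d}\<close> d by simp
  qed
qed

lemma bezout_ht_generated_radical_ideals_insert:
  fixes P :: "'a::idom set"
  assumes bez: "bezout_domain TYPE('a)" and P: "is_prime_ideal P"
    and len: "enat (length \<theta>s) = ht P" and rad: "radical (gen_ideal (set \<theta>s)) = P"
    and "\<theta>s \<noteq> []" and "x \<in> P"
  shows "gen_ideal (insert x (set \<theta>s)) \<in> ht_generated_radical_ideals P"
proof -
  have "gen_ideal (set \<theta>s) \<subseteq> gen_ideal (insert x (set \<theta>s))"
    by (rule gen_ideal_mono) blast
  moreover have "gen_ideal (insert x (set \<theta>s)) \<subseteq> P"
  proof (rule gen_ideal_least)
    show "is_ideal P"
      using P by (simp add: is_prime_ideal_def)
    show "insert x (set \<theta>s) \<subseteq> P"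
      using \<open>x \<in> P\<close> rad radical_superset gen_ideal_superset[of "set \<theta>s"] by blast
  qed
  ultimately have "radical (gen_ideal (insert x (set \<theta>s))) = P"
    by (rule radical_eq_prime_ideal_if_between[OF P _ _ rad])
  moreover obtain \<theta>s' where "length \<theta>s' = length \<theta>s"
    "gen_ideal (insert x (set \<theta>s)) = gen_ideal (set \<theta>s')"
    by (rule bezout_gen_ideal_insert[OF bez \<open>\<theta>s \<noteq> []\<close>])
  ultimately show ?thesis
    using len unfolding ht_generated_radical_ideals_def
    by (intro CollectI conjI exI[of _ \<theta>s']) simp_all
qed

lemma bezout_radically_finite_prime_principal:
  fixes P :: "'a::idom set"
  assumes bez: "bezout_domain TYPE('a)" and rf: "radically_finite TYPE('a)"
    and P: "is_prime_ideal P"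
  shows "is_principal_ideal P"
proof -
  obtain A where "A \<in> ht_generated_radical_ideals P"
    and A_max: "\<not> (\<exists>B\<in>ht_generated_radical_ideals P. A \<subset> B)"
    using rf[unfolded radically_finite_iff, rule_format, OF P] by blast
  then obtain \<theta>s where len: "enat (length \<theta>s) = ht P" and A: "A = gen_ideal (set \<theta>s)"
    and rad: "radical A = P"
    by (auto simp: ht_generated_radical_ideals_def)
  have "A \<subseteq> P"
    using rad radical_superset by blast
  show ?thesis
  proof (cases "\<theta>s = []")
    case True
    then have "A = {0}"
      using A by (simp add: gen_ideal_empty)
    then have "P = {0}"
      using rad by (simp add: radical_zero)
    then show ?thesis
      using gen_ideal_zero by (metis is_principal_ideal_def)
  next
    case False
    have "x \<in> A" if "x \<in> P" for x
    proof -
      have "gen_ideal (insert x (set \<theta>s)) \<in> ht_generated_radical_ideals P"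
        using bezout_ht_generated_radical_ideals_insert[OF bez P len _ False \<open>x \<in> P\<close>] rad A
        by blast
      moreover have "A \<subseteq> gen_ideal (insert x (set \<theta>s))"
        unfolding A by (rule gen_ideal_mono) blast
      ultimately have "A = gen_ideal (insert x (set \<theta>s))"
        using A_max by blast
      then show "x \<in> A"
        using gen_ideal_superset by blast
    qed
    then have "P = gen_ideal (set \<theta>s)"
      using \<open>A \<subseteq> P\<close> A by blast
    then show ?thesis
      using bez finite_set[of \<theta>s] unfolding bezout_domain_def is_principal_ideal_def by blast
  qed
qed

section \<open>Principal ideal domains are radically finite\<close>

lemma pid_prime_idealE:
  assumes "principal_ideal_domain TYPE('a::idom)" "is_prime_ideal (P :: 'a set)"
  obtains p where "P = gen_ideal {p}"
  using assms unfolding principal_ideal_domain_def is_prime_ideal_def by blast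

lemma principal_prime_ideal_maximal_among_principal:
  fixes p q :: "'a::idom"
  assumes prime: "is_prime_ideal (gen_ideal {p})" and "p \<noteq> 0"
    and sub: "gen_ideal {p} \<subseteq> gen_ideal {q}" and proper: "gen_ideal {q} \<noteq> UNIV"
  shows "gen_ideal {q} = gen_ideal {p}"
proof (rule ccontr)
  assume ne: "gen_ideal {q} \<noteq> gen_ideal {p}"
  have "q \<notin> gen_ideal {p}"
    using ne sub gen_ideal_least[OF is_ideal_gen_ideal, of "{q}" "{p}"] by blast
  obtain r where r: "p = r * q"
    using sub gen_ideal_superset[of "{p}"] by (auto simp: gen_ideal_singleton)
  moreover have "p \<in> gen_ideal {p}"
    using gen_ideal_superset by blast
  ultimately have "r \<in> gen_ideal {p}"
    using prime \<open>q \<notin> gen_ideal {p}\<close> unfolding is_prime_ideal_def by metis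
  then obtain s where "r = s * p"
    by (auto simp: gen_ideal_singleton)
  then have "p * (s * q) = p * 1"
    using r by (simp add: ac_simps)
  then have "s * q = 1"
    using \<open>p \<noteq> 0\<close> by (metis mult_left_cancel)
  then have "x = (x * s) * q" for x
    by (simp add: mult.assoc)
  then have "x \<in> gen_ideal {q}" for x
    unfolding gen_ideal_singleton by (metis rangeI)
  then show False
    using proper by blast
qed

lemma pid_nonzero_prime_ideal_maximal:
  fixes P Q :: "'a::idom set"
  assumes pid: "principal_ideal_domain TYPE('a)"
    and P: "is_prime_ideal P" "P \<noteq> {0}" and Q: "is_prime_ideal Q" "P \<subseteq> Q"
  shows "P = Q"
proof -
  obtain p where p: "P = gen_ideal {p}"
    using pid_prime_idealE[OF pid P(1)] .
  obtain q where q: "Q = gen_ideal {q}"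
    using pid_prime_idealE[OF pid Q(1)] .
  have "p \<noteq> 0"
    using p P(2) gen_ideal_zero by auto
  have "Q \<noteq> UNIV"
    using Q(1) by (simp add: is_prime_ideal_def)
  then have "gen_ideal {q} = gen_ideal {p}"
    using P(1) Q(2) unfolding p q
    by (intro principal_prime_ideal_maximal_among_principal[OF _ \<open>p \<noteq> 0\<close>])
  then show ?thesis
    unfolding p q by simp
qed

lemma pid_ht_prime_ideal:
  fixes P :: "'a::idom set"
  assumes "principal_ideal_domain TYPE('a)" "is_prime_ideal P"
  shows "ht P = (if P = {0} then 0 else 1)"
proof (cases "P = {0}")
  case True
  then show ?thesis
    using assms(2) by (simp add: ht_prime_ideal prime_height_zero_ideal)
next
  case False
  have "prime_height P = 1"
    using pid_nonzero_prime_ideal_maximal[OF assms(1) _ _ assms(2)]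
    by (rule prime_height_eq_1[OF assms(2) False])
  then show ?thesis
    using assms(2) False by (simp add: ht_prime_ideal)
qed

lemma zero_divisor_zero: "zero_divisor (0::'a::idom)"
  unfolding zero_divisor_def by (auto intro: exI[of _ 1])

lemma pid_radically_perfect_prime_ideal:
  fixes P :: "'a::idom set"
  assumes pid: "principal_ideal_domain TYPE('a)" and P: "is_prime_ideal P"
  shows "radically_perfect P"
proof (cases "P = {0}")
  case True
  have "ht P = 0"
    using pid_ht_prime_ideal[OF assms] True by simp
  moreover have "arithmetical_rank P = 0"
    using True by (simp add: arithmetical_rank_eq_0)
  moreover have "radical P = radical (gen_ideal {0})"
    using True by (simp add: gen_ideal_zero)
  ultimately show ?thesis
    unfolding radically_perfect_iff using zero_divisor_zero by auto
next
  case False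
  obtain p where "P = gen_ideal {p}"
    using pid_prime_idealE[OF pid P] .
  moreover have "radical P \<noteq> radical {0}"
    using False radical_prime_ideal[OF P] by (simp add: radical_zero)
  ultimately have "arithmetical_rank P = 1"
    by (intro arithmetical_rank_eq_1) simp_all
  moreover have "ht P = 1"
    using pid_ht_prime_ideal[OF assms] False by simp
  ultimately show ?thesis
    unfolding radically_perfect_iff by simp
qed

lemma radically_finite_if_prime_ideals_generated_by_height:
  assumes "\<And>P :: 'a::comm_ring_1 set. is_prime_ideal P \<Longrightarrow> radically_perfect P"
    and "\<And>P :: 'a set. is_prime_ideal P \<Longrightarrow>
      \<exists>\<theta>s. enat (length \<theta>s) = ht P \<and> P = gen_ideal (set \<theta>s)"
  shows "radically_finite TYPE('a)"
  unfolding radically_finite_iff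
proof (intro allI impI conjI)
  fix P :: "'a set"
  assume P: "is_prime_ideal P"
  then show "radically_perfect P"
    by (rule assms(1))
  have "P \<in> ht_generated_radical_ideals P"
    using assms(2)[OF P] radical_prime_ideal[OF P] by (simp add: ht_generated_radical_ideals_def)
  moreover have "\<not> (\<exists>B\<in>ht_generated_radical_ideals P. P \<subset> B)"
  proof
    assume "\<exists>B\<in>ht_generated_radical_ideals P. P \<subset> B"
    then obtain B where "radical B = P" "P \<subset> B"
      by (auto simp: ht_generated_radical_ideals_def)
    then show False
      using radical_superset[of B] by blast
  qed
  moreover have "finite C" if "C \<subseteq> {J. is_ideal J \<and> P \<subseteq> J \<and> J \<subseteq> P}" for C :: "'a set set"
    using that finite_subset[of C "{P}"] by auto
  ultimately show "\<exists>A\<in>ht_generated_radical_ideals P.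
      \<not> (\<exists>B\<in>ht_generated_radical_ideals P. A \<subset> B) \<and>
      (\<forall>C. C \<subseteq> {J. is_ideal J \<and> A \<subseteq> J \<and> J \<subseteq> P} \<and> (\<forall>J\<in>C. \<forall>K\<in>C. J \<subseteq> K \<or> K \<subseteq> J)
        \<longrightarrow> finite C)"
    by (intro bexI[of _ P]) auto
qed

lemma pid_radically_finite:
  assumes pid: "principal_ideal_domain TYPE('a::idom)"
  shows "radically_finite TYPE('a)"
proof (rule radically_finite_if_prime_ideals_generated_by_height)
  fix P :: "'a set"
  assume P: "is_prime_ideal P"
  then show "radically_perfect P"
    by (rule pid_radically_perfect_prime_ideal[OF pid])
  obtain p where p: "P = gen_ideal {p}"
    using pid_prime_idealE[OF pid P] .
  show "\<exists>\<theta>s. enat (length \<theta>s) = ht P \<and> P = gen_ideal (set \<theta>s)"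
  proof (cases "P = {0}")
    case True
    then show ?thesis
      using pid_ht_prime_ideal[OF pid P]
      by (intro exI[of _ "[]"]) (simp add: gen_ideal_empty zero_enat_def)
  next
    case False
    then show ?thesis
      using pid_ht_prime_ideal[OF pid P] p
      by (intro exI[of _ "[p]"]) (simp add: one_enat_def)
  qed
qed

theorem corollary2p4:
  assumes "bezout_domain TYPE('a::idom)"
    and "krull_dim TYPE('a) \<noteq> \<infinity>"
  shows "radically_finite TYPE('a) \<longleftrightarrow> principal_ideal_domain TYPE('a)"
proof
  assume "radically_finite TYPE('a)"
  then show "principal_ideal_domain TYPE('a)"
    by (intro principal_ideal_domain_if_primes_principal
        bezout_radically_finite_prime_principal[OF assms(1)])
next
  assume "principal_ideal_domain TYPE('a)"
  then show "radically_finite TYPE('a)"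
    by (rule pid_radically_finite)
qed

end
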